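(* Let $m\ge1$ and let $u$ be an $m$-labeled binary tree with $|u|=p$ edges. The generating function $\mathbf C^{\mathcal B}_{m,p}(z)=\sum_{n\ge0} c_n z^n$, where $c_n$ is the number of $m$-labeled binary trees with $n$ edges that contain $u$ as a subtree, is $$\mathbf C^{\mathcal B}_{m,p}(z)=\frac{1}{2mz^2}\left(\sqrt{1-4mz+4mz^{p+2}}-\sqrt{1-4mz}\right).$$
   Context: An $m$-labeled binary tree is a non-empty finite rooted tree whose nodes carry labels from $\{1,\dots,m\}$ and in which every node has an optional left child and an optional right child (a node with only a left child is distinct from one with only a right child). Its size is its number of edges. A tree $t$ contains $u$ as a subtree if for some node $v$ of $t$, the subtree of $t$ rooted at $v$ (consisting of $v$ and all its descendants) equals $u$. *)

theory Defs
  imports Complex_Main "HOL-Library.Tree"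
begin

text \<open>An m-labeled binary tree: a non-empty tree (Leaf denotes the absent child)
  whose node labels lie in {1..m}.\<close>
definition labeled_bt :: "nat \<Rightarrow> nat tree \<Rightarrow> bool" where
  "labeled_bt m t \<longleftrightarrow> t \<noteq> Leaf \<and> set_tree t \<subseteq> {1..m}"

definition edges :: "'a tree \<Rightarrow> nat" where
  "edges t = size t - 1"

definition contains_subtree :: "'a tree \<Rightarrow> 'a tree \<Rightarrow> bool" where
  "contains_subtree t u \<longleftrightarrow> u \<in> subtrees t"

definition count_containing :: "nat \<Rightarrow> nat tree \<Rightarrow> nat \<Rightarrow> nat" where
  "count_containing m u n = card {t. labeled_bt m t \<and> edges t = n \<and> contains_subtree t u}"

end

theory Submission
  imports Defs
begin

text \<open>Let $T(x)$ and $A(x)$ be the generating functions, by number of nodes (the empty tree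
  included), of all $m$-labeled trees and of those avoiding $u$. Splitting at the root gives
  $T = 1 + m x T^2$ and, since the split over-counts the avoiders by exactly the tree $u$ itself,
  $A = 1 + m x A^2 - x^{p+1}$; the trees containing $u$ are counted by $(T - A)/x$. The correct root
  of each quadratic is singled out by $2 m x A \le 1$, which follows from bounding the partial sums
  of the coefficients at $|x|$ by the fixed point $y = 1 + m |x| y^2$.\<close>

definition cauchy_square :: "(nat \<Rightarrow> real) \<Rightarrow> nat \<Rightarrow> real" where
  "cauchy_square b k = (\<Sum>i\<le>k. b i * b (k - i))"

lemma cauchy_square_term:
  "(\<Sum>i\<le>k. (b i * x^i) * (b (k - i) * x^(k - i))) = cauchy_square b k * (x::real)^k"
proof -
  have "(b i * x^i) * (b (k - i) * x^(k - i)) = b i * b (k - i) * x^k" if "i \<le> k" for i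
    using that by (simp add: power_add[symmetric] mult_ac)
  then show ?thesis
    unfolding cauchy_square_def sum_distrib_right by (intro sum.cong) auto
qed

lemma sum_cauchy_square_le_square:
  assumes "\<And>k. b k \<ge> 0" and "x \<ge> 0"
  shows "(\<Sum>k<N. cauchy_square b k * x^k) \<le> (\<Sum>k<N. b k * x^k)^2"
proof -
  define g where "g i j = (b i * x^i) * (b j * x^j)" for i j
  have "(\<Sum>k<N. cauchy_square b k * x^k) = (\<Sum>k<N. \<Sum>i\<le>k. g i (k - i))"
    by (simp add: g_def cauchy_square_term)
  also have "\<dots> = (\<Sum>(i,j)\<in>{(i,j). i + j < N}. g i j)"
    by (rule sum.triangle_reindex[symmetric])
  also have "\<dots> \<le> (\<Sum>(i,j)\<in>{..<N}\<times>{..<N}. g i j)"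
    by (rule sum_mono2) (auto simp: g_def assms)
  also have "\<dots> = (\<Sum>k<N. b k * x^k)^2"
    by (simp add: power2_eq_square sum_product sum.cartesian_product g_def)
  finally show ?thesis .
qed

lemma cauchy_square_sums:
  assumes "summable (\<lambda>k. norm (b k * x^k))"
  shows "(\<lambda>k. cauchy_square b k * x^k) sums (\<Sum>k. b k * x^k)^2"
  using Cauchy_product_sums[OF assms assms] by (simp add: cauchy_square_term power2_eq_square)

lemma catalan_root_eq:
  fixes t :: real
  assumes "0 < t" and "4 * t \<le> 1"
  defines "y \<equiv> (1 - sqrt (1 - 4 * t)) / (2 * t)"
  shows "y = 1 + t * y^2"
proof -
  have "sqrt (1 - 4 * t) ^ 2 = 1 - 4 * t" using assms by simp
  then show ?thesis using assms(1) unfolding y_def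
    by (simp add: field_simps power2_eq_square)
qed

lemma sqrt_discriminant_eq:
  fixes S t d :: real
  assumes "S = 1 + t * S^2 - d" and "2 * t * S \<le> 1"
  shows "sqrt (1 - 4 * t + 4 * t * d) = 1 - 2 * t * S"
proof -
  have "4 * t * (S + d) = 4 * t * (1 + t * S^2)"
    using assms(1) by simp
  then have "1 - 4 * t + 4 * t * d = (1 - 2 * t * S)^2"
    by (simp add: power2_eq_square algebra_simps)
  then show ?thesis using assms(2) by simp
qed

lemma subcatalan_summable_le:
  fixes b :: "nat \<Rightarrow> real" and a x :: real
  assumes nonneg: "\<And>k. b k \<ge> 0" and "b 0 = 1"
    and rec: "\<And>k. b (Suc k) \<le> a * cauchy_square b k"
    and "0 < a" "0 < x" "4 * a * x < 1"
  defines "y \<equiv> (1 - sqrt (1 - 4 * (a * x))) / (2 * (a * x))"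
  shows "summable (\<lambda>k. b k * x^k)" and "(\<Sum>k. b k * x^k) \<le> y"
proof -
  have ax: "0 < a * x" using assms by simp
  have y_eq: "y = 1 + a * x * y^2"
    unfolding y_def using ax assms(6) by (intro catalan_root_eq) auto
  have partial_le: "(\<Sum>k<N. b k * x^k) \<le> y" for N
  proof (induction N)
    case 0
    have "a * x * y^2 \<ge> 0" using ax by simp
    then show ?case using y_eq by simp
  next
    case (Suc N)
    have partial_nonneg: "0 \<le> (\<Sum>k<N. b k * x^k)" using nonneg \<open>0 < x\<close> by (auto intro!: sum_nonneg)
    have "(\<Sum>k<Suc N. b k * x^k) = 1 + (\<Sum>k<N. b (Suc k) * x^Suc k)"
      by (subst sum.lessThan_Suc_shift) (simp add: \<open>b 0 = 1\<close>)
    also have "\<dots> \<le> 1 + a * x * (\<Sum>k<N. cauchy_square b k * x^k)"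
      using rec \<open>0 < x\<close> by (auto simp: sum_distrib_left algebra_simps intro!: sum_mono mult_right_mono)
    also have "\<dots> \<le> 1 + a * x * (\<Sum>k<N. b k * x^k)^2"
      using sum_cauchy_square_le_square[of b x N] nonneg \<open>0 < x\<close> ax by (auto intro!: mult_left_mono)
    also have "\<dots> \<le> 1 + a * x * y^2"
      using Suc partial_nonneg ax by (auto intro!: mult_left_mono power_mono)
    finally show ?case using y_eq by simp
  qed
  show summable: "summable (\<lambda>k. b k * x^k)"
    using nonneg \<open>0 < x\<close> partial_le[of "Suc _"]
    by (intro bounded_imp_summable[where B = y]) (auto simp: lessThan_Suc_atMost)
  show "(\<Sum>k. b k * x^k) \<le> y"
    by (rule suminf_le_const[OF summable partial_le])
qed

lemma suminf_quadratic_eq: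
  fixes b :: "nat \<Rightarrow> real" and a x c :: real
  assumes "summable (\<lambda>k. norm (b k * x^k))" and "b 0 = 1" and "q \<ge> 1"
    and rec: "\<And>k. b (Suc k) = a * cauchy_square b k - (if Suc k = q then c else 0)"
  shows "(\<Sum>k. b k * x^k) = 1 + a * x * (\<Sum>k. b k * x^k)^2 - c * x^q"
proof -
  define S where "S = (\<Sum>k. b k * x^k)"
  have "(\<lambda>k. a * x * (cauchy_square b k * x^k)) sums (a * x * S^2)"
    unfolding S_def by (intro sums_mult cauchy_square_sums assms(1))
  moreover have "(\<lambda>k. if k = q - 1 then c * x^Suc k else 0) sums (c * x^q)"
    using sums_single[of "q - 1" "\<lambda>k. c * x^Suc k"] \<open>q \<ge> 1\<close> by simp
  ultimately have "(\<lambda>k. a * x * (cauchy_square b k * x^k) - (if k = q - 1 then c * x^Suc k else 0))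
      sums (a * x * S^2 - c * x^q)"
    by (rule sums_diff)
  moreover have "a * x * (cauchy_square b k * x^k) - (if k = q - 1 then c * x^Suc k else 0)
      = b (Suc k) * x^Suc k" for k
    using \<open>q \<ge> 1\<close> by (auto simp: rec algebra_simps)
  ultimately have "(\<lambda>k. b (Suc k) * x^Suc k) sums (a * x * S^2 - c * x^q)"
    by simp
  then have "(\<lambda>k. b k * x^k) sums (a * x * S^2 - c * x^q + 1)"
    using sums_Suc_iff[of "\<lambda>k. b k * x^k"] \<open>b 0 = 1\<close> by simp
  then show ?thesis unfolding S_def by (simp add: sums_iff)
qed

lemma perturbed_catalan_sums:
  fixes b :: "nat \<Rightarrow> real" and a x c :: real
  assumes nonneg: "\<And>k. b k \<ge> 0" and "b 0 = 1" and "q \<ge> 1" and "c \<ge> 0" and "0 < a"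
    and rec: "\<And>k. b (Suc k) = a * cauchy_square b k - (if Suc k = q then c else 0)"
    and "x \<noteq> 0" and "\<bar>x\<bar> < 1 / (4 * a)"
  shows "(\<lambda>k. b k * x^k) sums ((1 - sqrt (1 - 4 * a * x + 4 * a * c * x^(q + 1))) / (2 * a * x))"
proof -
  have "0 < \<bar>x\<bar>" "4 * a * \<bar>x\<bar> < 1"
    using assms(5,7,8) by (auto simp: field_simps)
  moreover have "b (Suc k) \<le> a * cauchy_square b k" for k
    using rec[of k] \<open>c \<ge> 0\<close> by auto
  ultimately have bound: "summable (\<lambda>k. b k * \<bar>x\<bar>^k)"
      "(\<Sum>k. b k * \<bar>x\<bar>^k) \<le> (1 - sqrt (1 - 4 * (a * \<bar>x\<bar>))) / (2 * (a * \<bar>x\<bar>))"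
    using subcatalan_summable_le[of b a "\<bar>x\<bar>"] nonneg \<open>b 0 = 1\<close> \<open>0 < a\<close> by blast+
  have norm_eq: "norm (b k * x^k) = b k * \<bar>x\<bar>^k" for k
    using nonneg[of k] by (simp add: abs_mult power_abs)
  have abs_summable: "summable (\<lambda>k. norm (b k * x^k))"
    unfolding norm_eq using bound by blast
  define S where "S = (\<Sum>k. b k * x^k)"
  have "\<bar>2 * a * x * S\<bar> \<le> 2 * a * \<bar>x\<bar> * (\<Sum>k. norm (b k * x^k))"
    unfolding S_def using summable_norm[OF abs_summable] \<open>0 < a\<close>
    by (simp add: abs_mult mult_left_mono)
  also have "\<dots> \<le> 2 * a * \<bar>x\<bar> * ((1 - sqrt (1 - 4 * (a * \<bar>x\<bar>))) / (2 * (a * \<bar>x\<bar>)))"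
    unfolding norm_eq using bound \<open>0 < \<bar>x\<bar>\<close> \<open>0 < a\<close> by (intro mult_left_mono) auto
  also have "\<dots> \<le> 1"
    using \<open>0 < \<bar>x\<bar>\<close> \<open>4 * a * \<bar>x\<bar> < 1\<close> \<open>0 < a\<close> by simp
  finally have "2 * (a * x) * S \<le> 1" by simp
  moreover have "S = 1 + (a * x) * S^2 - c * x^q"
    unfolding S_def using suminf_quadratic_eq[OF abs_summable \<open>b 0 = 1\<close> \<open>q \<ge> 1\<close> rec] by simp
  ultimately have "sqrt (1 - 4 * (a * x) + 4 * (a * x) * (c * x^q)) = 1 - 2 * (a * x) * S"
    by (intro sqrt_discriminant_eq)
  then have "S = (1 - sqrt (1 - 4 * a * x + 4 * a * c * x^(q + 1))) / (2 * a * x)"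
    using \<open>x \<noteq> 0\<close> \<open>0 < a\<close> by (simp add: field_simps)
  then show ?thesis
    unfolding S_def using summable_sums[OF summable_norm_cancel[OF abs_summable]] by simp
qed

lemma sums_shift_divide:
  fixes f :: "nat \<Rightarrow> real"
  assumes "(\<lambda>k. f k * z^k) sums s" and "f 0 = 0" and "z \<noteq> 0"
  shows "(\<lambda>n. f (Suc n) * z^n) sums (s / z)"
proof -
  have "(\<lambda>n. f (Suc n) * z^Suc n) sums s"
    using assms(1,2) sums_Suc_iff[of "\<lambda>k. f k * z^k"] by simp
  then have "(\<lambda>n. f (Suc n) * z^Suc n / z) sums (s / z)"
    by (rule sums_divide)
  then show ?thesis using \<open>z \<noteq> 0\<close> by simp
qed

definition avoiding_trees :: "nat \<Rightarrow> nat tree set \<Rightarrow> nat \<Rightarrow> nat tree set" where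
  "avoiding_trees m U k = {t. set_tree t \<subseteq> {1..m} \<and> size t = k \<and> (\<forall>u\<in>U. u \<notin> subtrees t)}"

text \<open>The first component records the size of the left subtree, so that the splits form a
  disjoint Sigma-set.\<close>
definition root_splits :: "nat \<Rightarrow> nat tree set \<Rightarrow> nat \<Rightarrow> (nat \<times> nat \<times> nat tree \<times> nat tree) set" where
  "root_splits m U k = (SIGMA i:{..k}. {1..m} \<times> avoiding_trees m U i \<times> avoiding_trees m U (k - i))"

definition node_of_split :: "nat \<times> nat \<times> nat tree \<times> nat tree \<Rightarrow> nat tree" where
  "node_of_split = (\<lambda>(i, a, l, r). Node l a r)"

lemma avoiding_trees_0: "avoiding_trees m U 0 = (if Leaf \<in> U then {} else {Leaf})"
  by (auto simp: avoiding_trees_def)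

lemma avoiding_trees_Suc:
  "avoiding_trees m U (Suc k) = node_of_split ` root_splits m U k - U"
proof (intro equalityI subsetI)
  fix t assume t: "t \<in> avoiding_trees m U (Suc k)"
  then obtain l a r where t_eq: "t = Node l a r"
    by (cases t) (auto simp: avoiding_trees_def)
  have "(size l, a, l, r) \<in> root_splits m U k" and "t \<notin> U"
    using t unfolding t_eq avoiding_trees_def root_splits_def by auto
  then show "t \<in> node_of_split ` root_splits m U k - U"
    unfolding t_eq node_of_split_def by force
next
  fix t assume "t \<in> node_of_split ` root_splits m U k - U"
  then obtain i a l r where "t = Node l a r" "t \<notin> U" "i \<le> k" "a \<in> {1..m}"
    "l \<in> avoiding_trees m U i" "r \<in> avoiding_trees m U (k - i)"
    by (auto simp: node_of_split_def root_splits_def)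
  then show "t \<in> avoiding_trees m U (Suc k)"
    by (auto simp: avoiding_trees_def)
qed

lemma finite_avoiding_trees: "finite (avoiding_trees m U k)"
proof (induction k rule: less_induct)
  case (less k)
  show ?case
  proof (cases k)
    case 0
    then show ?thesis by (simp add: avoiding_trees_0)
  next
    case (Suc j)
    have "finite (root_splits m U j)"
      unfolding root_splits_def using less Suc by (intro finite_SigmaI finite_cartesian_product) auto
    then show ?thesis unfolding Suc avoiding_trees_Suc by simp
  qed
qed

lemma finite_root_splits: "finite (root_splits m U k)"
  unfolding root_splits_def by (simp add: finite_avoiding_trees)

lemma inj_on_node_of_split: "inj_on node_of_split (root_splits m U k)"
  by (auto simp: inj_on_def node_of_split_def root_splits_def avoiding_trees_def)

lemma card_root_splits:
  "real (card (root_splits m U k)) = real m * cauchy_square (\<lambda>i. real (card (avoiding_trees m U i))) k"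
  unfolding root_splits_def cauchy_square_def
  by (subst card_SigmaI) (auto simp: finite_avoiding_trees card_cartesian_product sum_distrib_left mult.assoc)

lemma card_avoiding_trees_Suc:
  "real (card (avoiding_trees m U (Suc k)))
     = real m * cauchy_square (\<lambda>i. real (card (avoiding_trees m U i))) k
       - real (card (node_of_split ` root_splits m U k \<inter> U))"
proof -
  let ?J = "node_of_split ` root_splits m U k"
  have "finite ?J" by (simp add: finite_root_splits)
  then have "card (?J - U) = card ?J - card (?J \<inter> U)" and "card (?J \<inter> U) \<le> card ?J"
    by (auto intro: card_Diff_subset_Int card_mono)
  moreover have "card ?J = card (root_splits m U k)"
    by (rule card_image[OF inj_on_node_of_split])
  ultimately show ?thesis
    by (simp add: avoiding_trees_Suc card_root_splits[symmetric] of_nat_diff)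
qed

lemma node_of_split_image_inter_singleton:
  assumes "labeled_bt m u"
  shows "node_of_split ` root_splits m {u} k \<inter> {u} = (if size u = Suc k then {u} else {})"
proof (cases "size u = Suc k")
  case True
  obtain l a r where u_eq: "u = Node l a r"
    using assms by (cases u) (auto simp: labeled_bt_def)
  have "u \<notin> subtrees l" and "u \<notin> subtrees r"
    using size_subtrees[of u l] size_subtrees[of u r] u_eq by auto
  then have "(size l, a, l, r) \<in> root_splits m {u} k"
    using assms True unfolding u_eq root_splits_def avoiding_trees_def labeled_bt_def by auto
  then have "u \<in> node_of_split ` root_splits m {u} k"
    unfolding u_eq node_of_split_def by force
  then show ?thesis using True by auto
next
  case False
  then show ?thesis
    by (auto simp: node_of_split_def root_splits_def avoiding_trees_def)
qed

lemma count_containing_eq_diff: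
  assumes "labeled_bt m u"
  shows "real (count_containing m u n)
           = real (card (avoiding_trees m {} (Suc n))) - real (card (avoiding_trees m {u} (Suc n)))"
proof -
  have sub: "avoiding_trees m {u} (Suc n) \<subseteq> avoiding_trees m {} (Suc n)"
    by (auto simp: avoiding_trees_def)
  have "labeled_bt m t \<and> edges t = n \<longleftrightarrow> set_tree t \<subseteq> {1..m} \<and> size t = Suc n" for t :: "nat tree"
    by (cases t) (auto simp: labeled_bt_def edges_def)
  then have "{t. labeled_bt m t \<and> edges t = n \<and> contains_subtree t u}
               = avoiding_trees m {} (Suc n) - avoiding_trees m {u} (Suc n)"
    by (auto simp: contains_subtree_def avoiding_trees_def)
  then show ?thesis
    unfolding count_containing_def using sub finite_avoiding_trees
    by (simp add: card_Diff_subset card_mono of_nat_diff)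
qed

theorem lemma8:
  fixes m p :: nat and u :: "nat tree" and z :: real
  assumes "m \<ge> 1" and "labeled_bt m u" and "edges u = p"
    and "z \<noteq> 0" and "\<bar>z\<bar> < 1 / (4 * real m)"
  shows "(\<lambda>n. real (count_containing m u n) * z ^ n) sums
           ((sqrt (1 - 4 * real m * z + 4 * real m * z ^ (p + 2)) - sqrt (1 - 4 * real m * z))
              / (2 * real m * z ^ 2))"
proof -
  define T where "T k = real (card (avoiding_trees m {} k))" for k
  define A where "A k = real (card (avoiding_trees m {u} k))" for k
  have "size u = Suc p" and "Leaf \<notin> {u}"
    using assms(2,3) by (auto simp: labeled_bt_def edges_def neq_Leaf_iff)
  define D0 where "D0 = sqrt (1 - 4 * real m * z)"
  define D1 where "D1 = sqrt (1 - 4 * real m * z + 4 * real m * z ^ (p + 2))"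
  have "T 0 = 1" and "A 0 = 1"
    using \<open>Leaf \<notin> {u}\<close> by (simp_all add: T_def A_def avoiding_trees_0)
  have "T (Suc k) = real m * cauchy_square T k" for k
    unfolding T_def by (simp add: card_avoiding_trees_Suc)
  then have sums_T: "(\<lambda>k. T k * z^k) sums ((1 - D0) / (2 * real m * z))"
    using perturbed_catalan_sums[of T 1 0 "real m" z] assms(1,4,5) \<open>T 0 = 1\<close>
    by (simp add: D0_def T_def)
  have "A (Suc k) = real m * cauchy_square A k - (if Suc k = Suc p then 1 else 0)" for k
    unfolding A_def using \<open>size u = Suc p\<close>
    by (simp add: card_avoiding_trees_Suc node_of_split_image_inter_singleton[OF assms(2)])
  then have sums_A: "(\<lambda>k. A k * z^k) sums ((1 - D1) / (2 * real m * z))"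
    using perturbed_catalan_sums[of A "Suc p" 1 "real m" z] assms(1,4,5) \<open>A 0 = 1\<close>
    by (simp add: D1_def A_def)
  have "(\<lambda>k. (T k - A k) * z^k) sums ((1 - D0) / (2 * real m * z) - (1 - D1) / (2 * real m * z))"
    unfolding left_diff_distrib by (rule sums_diff[OF sums_T sums_A])
  then have "(\<lambda>n. (T (Suc n) - A (Suc n)) * z^n) sums
      (((1 - D0) / (2 * real m * z) - (1 - D1) / (2 * real m * z)) / z)"
    using \<open>T 0 = 1\<close> \<open>A 0 = 1\<close> assms(4) by (intro sums_shift_divide) simp_all
  then show ?thesis
    unfolding D0_def[symmetric] D1_def[symmetric]
    by (simp add: count_containing_eq_diff[OF assms(2)] T_def A_def diff_divide_distrib[symmetric] power2_eq_square mult.assoc)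
qed

end
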